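(* Let $X$ be a $q$-generic $n\times m$ matrix ($m\le n$) whose entries lie in a division ring containing $K_q$ in its center. Let $i_1,\dots,i_m\in[n]$ (not necessarily in increasing order and not necessarily distinct), and let $A$ be the $m\times m$ matrix whose $t$-th row is $(x_{i_t1},\dots,x_{i_tm})$. For $0\le k<m$ let $A^{(k)}$ denote the matrix obtained from $A$ by deleting its first $k$ rows and first $k$ columns. Then, whenever the quasideterminants on the right are defined, $$\det_qA=\big|A^{(0)}\big|_{11}\,\big|A^{(1)}\big|_{11}\,\big|A^{(2)}\big|_{11}\cdots\big|A^{(m-1)}\big|_{11},$$ where $|A^{(m-1)}|_{11}=x_{i_m m}$ (i.e. $\det_qA=|A|_{i_11}|A^{i_11}|_{i_22}|A^{i_1i_2,12}|_{i_33}\cdots a_{i_mm}$).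
   Context: $K_q$ is a field of characteristic $0$ with $q\neq0$ not a root of unity. An $n\times m$ matrix $X=(x_{ij})$ is $q$-generic if for all $i<j$, $k<l$: $x_{kj}x_{ki}=qx_{ki}x_{kj}$; $x_{jk}x_{ik}=qx_{ik}x_{jk}$; $x_{jk}x_{il}=x_{il}x_{jk}$; $x_{jl}x_{ik}=x_{ik}x_{jl}+(q-q^{-1})x_{il}x_{jk}$. For a square matrix $A=(a_{ij})$ of size $m$, $\det_qA=\sum_{\sigma\in S_m}(-q)^{-\ell(\sigma)}a_{1\sigma1}\cdots a_{m\sigma m}$, where $\ell(\sigma)$ is the number of inversions of $\sigma$. For a square matrix $B$, $B^{ij}$ is $B$ with row $i$ and column $j$ deleted, and the $(i,j)$-quasideterminant is $|B|_{ij}=b_{ij}-\xi(B^{ij})^{-1}\zeta$, with $\xi$ row $i$ of $B$ without its $j$-th entry and $\zeta$ column $j$ of $B$ without its $i$-th entry (defined when $B^{ij}$ is invertible). *)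

theory Defs
  imports Main "HOL-Combinatorics.Permutations"
begin

text \<open>Matrices are functions nat => nat => 'a, rows/columns indexed from 1.
  Entries live in a (possibly noncommutative) division ring 'a.\<close>

definition q_generic :: "'a::division_ring \<Rightarrow> nat \<Rightarrow> nat \<Rightarrow> (nat \<Rightarrow> nat \<Rightarrow> 'a) \<Rightarrow> bool" where
  "q_generic q n m x \<longleftrightarrow>
     (\<forall>k\<in>{1..n}. \<forall>i\<in>{1..m}. \<forall>j\<in>{1..m}. i < j \<longrightarrow> x k j * x k i = q * x k i * x k j) \<and>
     (\<forall>i\<in>{1..n}. \<forall>j\<in>{1..n}. \<forall>k\<in>{1..m}. i < j \<longrightarrow> x j k * x i k = q * x i k * x j k) \<and>
     (\<forall>i\<in>{1..n}. \<forall>j\<in>{1..n}. \<forall>k\<in>{1..m}. \<forall>l\<in>{1..m}. i < j \<longrightarrow> k < l \<longrightarrow>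
        x j k * x i l = x i l * x j k \<and>
        x j l * x i k = x i k * x j l + (q - inverse q) * x i l * x j k)"

definition inversions :: "(nat \<Rightarrow> nat) \<Rightarrow> nat \<Rightarrow> nat" where
  "inversions \<sigma> m = card {(i, j). i \<in> {1..m} \<and> j \<in> {1..m} \<and> i < j \<and> \<sigma> j < \<sigma> i}"

definition qdet_q :: "'a::division_ring \<Rightarrow> nat \<Rightarrow> (nat \<Rightarrow> nat \<Rightarrow> 'a) \<Rightarrow> 'a" where
  "qdet_q q m A = (\<Sum>\<sigma>\<in>{\<sigma>. \<sigma> permutes {1..m}}.
      inverse ((- q) ^ inversions \<sigma> m) * prod_list (map (\<lambda>t. A t (\<sigma> t)) [1..<m+1]))"

definition is_inverse_on :: "nat set \<Rightarrow> nat set \<Rightarrow> (nat \<Rightarrow> nat \<Rightarrow> 'a::division_ring) \<Rightarrow> (nat \<Rightarrow> nat \<Rightarrow> 'a) \<Rightarrow> bool" where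
  "is_inverse_on R C M N \<longleftrightarrow>
     (\<forall>r\<in>R. \<forall>r'\<in>R. (\<Sum>c\<in>C. M r c * N c r') = (if r = r' then 1 else 0)) \<and>
     (\<forall>c\<in>C. \<forall>c'\<in>C. (\<Sum>r\<in>R. N c r * M r c') = (if c = c' then 1 else 0))"

definition invertible_on :: "nat set \<Rightarrow> nat set \<Rightarrow> (nat \<Rightarrow> nat \<Rightarrow> 'a::division_ring) \<Rightarrow> bool" where
  "invertible_on R C M \<longleftrightarrow> (\<exists>N. is_inverse_on R C M N)"

definition inv_on :: "nat set \<Rightarrow> nat set \<Rightarrow> (nat \<Rightarrow> nat \<Rightarrow> 'a::division_ring) \<Rightarrow> (nat \<Rightarrow> nat \<Rightarrow> 'a)" where
  "inv_on R C M = (SOME N. is_inverse_on R C M N)"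

definition quasidet :: "nat set \<Rightarrow> nat set \<Rightarrow> (nat \<Rightarrow> nat \<Rightarrow> 'a::division_ring) \<Rightarrow> nat \<Rightarrow> nat \<Rightarrow> 'a" where
  "quasidet R C M i j = M i j -
     (\<Sum>c\<in>C - {j}. \<Sum>r\<in>R - {i}. M i c * inv_on (R - {i}) (C - {j}) M c r * M r j)"

definition quasidet_defined :: "nat set \<Rightarrow> nat set \<Rightarrow> (nat \<Rightarrow> nat \<Rightarrow> 'a::division_ring) \<Rightarrow> nat \<Rightarrow> nat \<Rightarrow> bool" where
  "quasidet_defined R C M i j \<longleftrightarrow> invertible_on (R - {i}) (C - {j}) M"

end

theory Submission
  imports Defs
begin

(* Expanding det_q A^(k) along its first row writes it as sum_u a_(k+1,u) y_u, where the
   cofactor y_(k+1) is det_q A^(k+1).  Replacing that first row by any other row of A^(k)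
   gives a q-determinant with two equal rows, which vanishes for a q-generic matrix.  So y is
   annihilated by all other rows of A^(k), and solving for the remaining cofactors with the
   inverse of the complementary block turns the expansion into |A^(k)|_11 y_(k+1).  Iterating
   over k gives the product.

   The vanishing reduces to 2x2 quantum minors by pairing every permutation sigma with
   sigma o (t t+1): the 2x2 minors of two equal rows vanish, and exchanging two distinct
   adjacent rows multiplies the q-determinant by -q^-1 or by its inverse, so equal rows can
   be moved next to each other. *)

definition central :: "'a::times \<Rightarrow> bool" where
  "central a \<longleftrightarrow> (\<forall>y. a * y = y * a)"

lemma centralD: "central a \<Longrightarrow> a * y = y * a"
  by (simp add: central_def)

lemma central_minus: "central (a::'a::ring_1) \<Longrightarrow> central (- a)"
  by (simp add: central_def)

lemma central_inverse:
  assumes "central (a::'a::division_ring)"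
  shows "central (inverse a)"
  unfolding central_def
proof
  fix y
  show "inverse a * y = y * inverse a"
  proof (cases "a = 0")
    case False
    have "inverse a * y = inverse a * (y * a) * inverse a"
      using False by (simp add: mult.assoc)
    also have "\<dots> = inverse a * (a * y) * inverse a"
      using centralD[OF assms, of y] by simp
    also have "\<dots> = y * inverse a"
      using False by (simp add: mult.assoc[symmetric])
    finally show ?thesis .
  qed simp
qed

lemma central_mult_left_commute:
  assumes "central (c::'a::semigroup_mult)"
  shows "c * (x * y) = x * (c * y)"
  by (metis assms centralD mult.assoc)

lemma central_power:
  assumes "central (a::'a::monoid_mult)"
  shows "central (a ^ k)"
proof (induction k)
  case (Suc k)
  show ?case unfolding central_def
  proof
    fix y
    have "a ^ Suc k * y = a * (a ^ k * y)" by (simp add: mult.assoc)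
    also have "\<dots> = (a * y) * a ^ k" using Suc by (simp add: centralD mult.assoc)
    also have "\<dots> = (y * a) * a ^ k" using centralD[OF assms] by simp
    also have "\<dots> = y * a ^ Suc k" by (simp add: mult.assoc)
    finally show "a ^ Suc k * y = y * a ^ Suc k" .
  qed
qed (simp add: central_def)

definition skip :: "nat \<Rightarrow> nat \<Rightarrow> nat" where
  "skip k j = (if j < k then j else Suc j)"

lemma skip_eq_iff [simp]: "skip k a = skip k b \<longleftrightarrow> a = b"
  by (auto simp: skip_def)

lemma skip_neq [simp]: "skip k a \<noteq> k" "k \<noteq> skip k a"
  by (auto simp: skip_def)

definition perm_cons :: "nat \<Rightarrow> nat \<Rightarrow> (nat \<Rightarrow> nat) \<Rightarrow> nat \<Rightarrow> nat" where
  "perm_cons p k \<tau> i = (if i = 1 then k else if i \<in> {2..Suc p} then skip k (\<tau> (i - 1)) else i)"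

lemma perm_cons_Suc: "i \<in> {1..p} \<Longrightarrow> perm_cons p k \<tau> (Suc i) = skip k (\<tau> i)"
  by (simp add: perm_cons_def)

lemma perm_cons_permutes:
  assumes k: "k \<in> {1..Suc p}" and \<tau>: "\<tau> permutes {1..p}"
  shows "perm_cons p k \<tau> permutes {1..Suc p}"
proof (rule bij_imp_permutes)
  let ?\<sigma> = "perm_cons p k \<tau>"
  have \<tau>_in: "\<tau> (i - 1) \<in> {1..p}" if "i \<in> {2..Suc p}" for i
    using that permutes_in_image[OF \<tau>, of "i - 1"] by auto
  have "?\<sigma> ` {1..Suc p} \<subseteq> {1..Suc p}"
    using k \<tau>_in by (auto simp: perm_cons_def skip_def)
  moreover have "inj_on ?\<sigma> {1..Suc p}"
  proof (rule inj_onI)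
    fix i j assume "i \<in> {1..Suc p}" "j \<in> {1..Suc p}" "?\<sigma> i = ?\<sigma> j"
    moreover have "\<tau> (i - 1) = \<tau> (j - 1) \<Longrightarrow> i - 1 = j - 1"
      using permutes_inj[OF \<tau>] by (auto dest: injD)
    ultimately show "i = j"
      by (auto simp: perm_cons_def split: if_splits)
  qed
  ultimately show "bij_betw ?\<sigma> {1..Suc p} {1..Suc p}"
    by (simp add: bij_betw_def endo_inj_surj)
qed (auto simp: perm_cons_def)

lemma perm_cons_inj:
  assumes "\<tau> permutes {1..p}" "\<tau>' permutes {1..p}" "perm_cons p k \<tau> = perm_cons p k' \<tau>'"
  shows "k = k' \<and> \<tau> = \<tau>'"
proof
  show "k = k'" using fun_cong[OF assms(3), of 1] by (simp add: perm_cons_def)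
  show "\<tau> = \<tau>'"
  proof
    fix i show "\<tau> i = \<tau>' i"
      using fun_cong[OF assms(3), of "Suc i"] \<open>k = k'\<close> permutes_not_in[OF assms(1)]
        permutes_not_in[OF assms(2)]
      by (cases "i \<in> {1..p}") (auto simp: perm_cons_Suc)
  qed
qed

lemma inj_on_perm_cons: "inj_on (\<lambda>(k, \<tau>). perm_cons p k \<tau>) (K \<times> {\<tau>. \<tau> permutes {1..p}})"
proof (rule inj_onI)
  fix a b assume "a \<in> K \<times> {\<tau>. \<tau> permutes {1..p}}" "b \<in> K \<times> {\<tau>. \<tau> permutes {1..p}}"
    and "(\<lambda>(k, \<tau>). perm_cons p k \<tau>) a = (\<lambda>(k, \<tau>). perm_cons p k \<tau>) b"
  then show "a = b"
    using perm_cons_inj[where p = p and \<tau> = "snd a" and \<tau>' = "snd b" and k = "fst a" and k' = "fst b"]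
    by (cases a, cases b) simp
qed

lemma permutations_Suc_eq_perm_cons_image:
  "{\<sigma>. \<sigma> permutes {1..Suc p}} =
     (\<lambda>(k, \<tau>). perm_cons p k \<tau>) ` ({1..Suc p} \<times> {\<tau>. \<tau> permutes {1..p}})"
    (is "?P = ?f ` ?KT")
proof -
  have "?f ` ?KT \<subseteq> ?P"
    by (auto simp del: One_nat_def intro!: perm_cons_permutes)
  moreover have "card (?f ` ?KT) = card ?P"
    unfolding card_image[OF inj_on_perm_cons] by (simp add: card_permutations card_cartesian_product)
  ultimately show ?thesis
    using card_subset_eq[OF finite_permutations[OF finite_atLeastAtMost]] by metis
qed

lemma card_permutes_preimage_less:
  assumes \<tau>: "\<tau> permutes {1..p}" and k: "k \<in> {1..Suc p}"
  shows "card {j \<in> {1..p}. \<tau> j < k} = k - 1"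
proof -
  have "\<tau> ` {j \<in> {1..p}. \<tau> j < k} = {1..<k}"
  proof
    show "\<tau> ` {j \<in> {1..p}. \<tau> j < k} \<subseteq> {1..<k}"
    proof (rule image_subsetI)
      fix j assume "j \<in> {j \<in> {1..p}. \<tau> j < k}"
      then show "\<tau> j \<in> {1..<k}" using permutes_in_image[OF \<tau>, of j] by auto
    qed
    show "{1..<k} \<subseteq> \<tau> ` {j \<in> {1..p}. \<tau> j < k}"
    proof
      fix v assume v: "v \<in> {1..<k}"
      then have "v \<in> \<tau> ` {1..p}" using k permutes_image[OF \<tau>] by auto
      then show "v \<in> \<tau> ` {j \<in> {1..p}. \<tau> j < k}" using v by auto
    qed
  qed
  then show ?thesis
    by (metis card_atLeastLessThan card_image permutes_inj_on[OF \<tau>])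
qed

lemma mem_Suc_pair_image:
  "(i, j) \<in> (\<lambda>(a, b). (Suc a, Suc b)) ` A \<longleftrightarrow> i \<noteq> 0 \<and> j \<noteq> 0 \<and> (i - 1, j - 1) \<in> A"
  by (cases i; cases j) (auto simp: image_iff split_beta intro: bexI[rotated])

lemma mem_Pair_1_Suc_image: "(i, j) \<in> (\<lambda>b. (1, Suc b)) ` J \<longleftrightarrow> i = 1 \<and> j \<noteq> 0 \<and> j - 1 \<in> J"
  by (cases j) (auto simp: image_iff)

lemma inversions_perm_cons:
  assumes k: "k \<in> {1..Suc p}" and \<tau>: "\<tau> permutes {1..p}"
  shows "inversions (perm_cons p k \<tau>) (Suc p) = (k - 1) + inversions \<tau> p"
proof -
  let ?\<sigma> = "perm_cons p k \<tau>"
  let ?I\<tau> = "{(i, j). i \<in> {1..p} \<and> j \<in> {1..p} \<and> i < j \<and> \<tau> j < \<tau> i}"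
  define J where "J = {j \<in> {1..p}. \<tau> j < k}"
  define S1 where "S1 = (\<lambda>j. (1::nat, Suc j)) ` J"
  define S2 where "S2 = (\<lambda>(i, j). (Suc i, Suc j)) ` ?I\<tau>"
  have "{(i, j). i \<in> {1..Suc p} \<and> j \<in> {1..Suc p} \<and> i < j \<and> ?\<sigma> j < ?\<sigma> i} = S1 \<union> S2"
  proof (rule set_eqI, clarify)
    fix i j :: nat
    show "(i, j) \<in> {(i, j). i \<in> {1..Suc p} \<and> j \<in> {1..Suc p} \<and> i < j \<and> ?\<sigma> j < ?\<sigma> i} \<longleftrightarrow>
        (i, j) \<in> S1 \<union> S2"
      unfolding S1_def S2_def mem_Suc_pair_image Un_iff mem_Pair_1_Suc_image
      by (auto simp: perm_cons_def J_def skip_def)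
  qed
  then have "inversions ?\<sigma> (Suc p) = card (S1 \<union> S2)"
    by (simp only: inversions_def)
  also have "\<dots> = card S1 + card S2"
  proof (rule card_Un_disjoint)
    show "finite S2" unfolding S2_def
      by (rule finite_imageI, rule finite_subset[of _ "{1..p} \<times> {1..p}"]) auto
  qed (auto simp: S1_def S2_def J_def)
  also have "card S1 = k - 1"
  proof -
    have "card S1 = card J"
      unfolding S1_def by (rule card_image) (simp add: inj_on_def)
    then show ?thesis
      unfolding J_def card_permutes_preimage_less[OF \<tau> k] .
  qed
  also have "card S2 = inversions \<tau> p"
    unfolding S2_def inversions_def by (rule card_image) (simp add: inj_on_def)
  finally show ?thesis .
qed

lemma prod_list_perm_cons:
  "prod_list (map (\<lambda>t. B t (perm_cons p k \<tau> t)) [1..<Suc p + 1]) =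
     B 1 k * prod_list (map (\<lambda>t. B (Suc t) (skip k (\<tau> t))) [1..<p + 1])"
proof -
  have upt: "[1..<Suc p + 1] = 1 # map Suc [1..<p + 1]"
    by (simp add: upt_conv_Cons map_Suc_upt)
  have tail: "map (\<lambda>t. B (Suc t) (perm_cons p k \<tau> (Suc t))) [1..<p + 1] =
      map (\<lambda>t. B (Suc t) (skip k (\<tau> t))) [1..<p + 1]"
    by (rule map_cong) (auto simp: perm_cons_def)
  show ?thesis
    unfolding upt list.map map_map prod_list.Cons comp_def tail
    by (simp add: perm_cons_def)
qed

lemma qdet_q_power_inverse:
  "qdet_q q m A = (\<Sum>\<sigma>\<in>{\<sigma>. \<sigma> permutes {1..m}}.
      inverse (- q) ^ inversions \<sigma> m * prod_list (map (\<lambda>t. A t (\<sigma> t)) [1..<m + 1]))"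
  by (simp only: qdet_q_def power_inverse)

lemma qdet_q_0 [simp]: "qdet_q q 0 A = 1"
  by (simp add: qdet_q_def inversions_def)

lemma qdet_q_cong:
  assumes "\<And>i j. i \<in> {1..p} \<Longrightarrow> j \<in> {1..p} \<Longrightarrow> A i j = B i j"
  shows "qdet_q q p A = qdet_q q p B"
  unfolding qdet_q_def
proof (intro sum.cong refl arg_cong[where f = "\<lambda>P. _ * prod_list P"] map_cong)
  fix \<sigma> i assume "\<sigma> \<in> {\<sigma>. \<sigma> permutes {1..p}}" "i \<in> set [1..<p + 1]"
  then show "A i (\<sigma> i) = B i (\<sigma> i)"
    using assms permutes_in_image[of \<sigma> "{1..p}" i] by auto
qed

lemma qdet_q_expand_first_row:
  fixes B :: "nat \<Rightarrow> nat \<Rightarrow> 'a::division_ring"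
  assumes q: "central q"
  shows "qdet_q q (Suc p) B = (\<Sum>k = 1..Suc p.
      B 1 k * (inverse (- q) ^ (k - 1) * qdet_q q p (\<lambda>i j. B (Suc i) (skip k j))))"
proof -
  define w where "w = inverse (- q)"
  let ?T = "{\<tau>. \<tau> permutes {1..p}}"
  let ?\<Pi> = "\<lambda>k \<tau>. prod_list (map (\<lambda>t. B (Suc t) (skip k (\<tau> t))) [1..<p + 1])"
  let ?F = "\<lambda>\<sigma>. w ^ inversions \<sigma> (Suc p) * prod_list (map (\<lambda>t. B t (\<sigma> t)) [1..<Suc p + 1])"
  have w: "central (w ^ n)" for n
    unfolding w_def by (intro central_power central_inverse central_minus q)
  have "qdet_q q (Suc p) B = (\<Sum>k = 1..Suc p. \<Sum>\<tau>\<in>?T. ?F (perm_cons p k \<tau>))"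
    unfolding qdet_q_power_inverse permutations_Suc_eq_perm_cons_image w_def
      sum.reindex[OF inj_on_perm_cons]
    by (simp add: sum.cartesian_product split_beta)
  also have "\<dots> = (\<Sum>k = 1..Suc p. \<Sum>\<tau>\<in>?T. B 1 k * (w ^ (k - 1) * (w ^ inversions \<tau> p * ?\<Pi> k \<tau>)))"
  proof (intro sum.cong refl)
    fix k \<tau> assume k: "k \<in> {1..Suc p}" and "\<tau> \<in> ?T"
    then have \<tau>: "\<tau> permutes {1..p}" by simp
    have "?F (perm_cons p k \<tau>) = w ^ (k - 1 + inversions \<tau> p) * (B 1 k * ?\<Pi> k \<tau>)"
      by (simp only: inversions_perm_cons[OF k \<tau>] prod_list_perm_cons)
    also have "\<dots> = B 1 k * (w ^ (k - 1 + inversions \<tau> p) * ?\<Pi> k \<tau>)"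
      by (rule central_mult_left_commute[OF w])
    finally show "?F (perm_cons p k \<tau>) = B 1 k * (w ^ (k - 1) * (w ^ inversions \<tau> p * ?\<Pi> k \<tau>))"
      by (simp add: power_add mult.assoc)
  qed
  also have "\<dots> = (\<Sum>k = 1..Suc p. B 1 k * (w ^ (k - 1) * qdet_q q p (\<lambda>i j. B (Suc i) (skip k j))))"
    unfolding qdet_q_power_inverse w_def by (simp only: sum_distrib_left)
  finally show ?thesis
    unfolding w_def .
qed

definition qminor2 :: "'a::division_ring \<Rightarrow> (nat \<Rightarrow> nat \<Rightarrow> 'a) \<Rightarrow> nat \<Rightarrow> nat \<Rightarrow> nat \<Rightarrow> 'a" where
  "qminor2 q B t u v = B t u * B (Suc t) v - inverse q * (B t v * B (Suc t) u)"

lemma transpose_Suc_less_iff: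
  assumes "(i, j) \<noteq> (t, Suc t)" "(i, j) \<noteq> (Suc t, t)"
  shows "Transposition.transpose t (Suc t) i < Transposition.transpose t (Suc t) j \<longleftrightarrow> i < j"
  using assms by (auto simp: transpose_def)

lemma transpose_Suc_mem_iff:
  assumes "1 \<le> t" "t < p"
  shows "Transposition.transpose t (Suc t) i \<in> {1..p} \<longleftrightarrow> i \<in> {1..p}"
  using assms by (auto simp: transpose_def)

lemma inversions_comp_transpose:
  assumes t: "1 \<le> t" "t < p" and less: "\<sigma> t < \<sigma> (Suc t)"
  shows "inversions (\<sigma> \<circ> Transposition.transpose t (Suc t)) p = Suc (inversions \<sigma> p)"
proof -
  let ?\<tau> = "Transposition.transpose t (Suc t)"
  let ?I = "\<lambda>\<sigma>. {(i, j). i \<in> {1..p} \<and> j \<in> {1..p} \<and> i < j \<and> \<sigma> j < \<sigma> i}"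
  define g where "g = (\<lambda>(i, j). (?\<tau> i, ?\<tau> j))"
  have g_g: "g (g z) = z" for z
    by (cases z) (simp add: g_def)
  have mem_g: "z \<in> g ` A \<longleftrightarrow> g z \<in> A" for z A
  proof
    assume "z \<in> g ` A"
    then show "g z \<in> A" by (auto simp only: g_g)
  next
    assume "g z \<in> A"
    then have "g (g z) \<in> g ` A" by (rule imageI)
    then show "z \<in> g ` A" by (simp only: g_g)
  qed
  have "(i, j) \<in> ?I (\<sigma> \<circ> ?\<tau>) \<longleftrightarrow> (i, j) \<in> insert (t, Suc t) (g ` ?I \<sigma>)" for i j
  proof (cases "(i, j) = (t, Suc t) \<or> (i, j) = (Suc t, t)")
    case True
    then show ?thesis
      unfolding mem_g insert_iff using t less by (auto simp: g_def)
  next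
    case False
    then show ?thesis
      unfolding mem_g insert_iff
      using transpose_Suc_less_iff[of i j t] transpose_Suc_mem_iff[OF t, of i]
        transpose_Suc_mem_iff[OF t, of j]
      by (auto simp: g_def)
  qed
  then have "?I (\<sigma> \<circ> ?\<tau>) = insert (t, Suc t) (g ` ?I \<sigma>)"
    by auto
  moreover have "(t, Suc t) \<notin> g ` ?I \<sigma>"
    using less unfolding mem_g by (simp add: g_def)
  moreover have "inj_on g (?I \<sigma>)"
    by (rule inj_on_inverseI[where g = g]) (rule g_g)
  moreover have "finite (?I \<sigma>)"
    by (rule finite_subset[of _ "{1..p} \<times> {1..p}"]) auto
  ultimately show ?thesis
    by (simp add: inversions_def card_image)
qed

lemma sum_permutations_transpose_pairs:
  fixes S :: "'b::linorder set"
  assumes S: "finite S" and ab: "a \<in> S" "b \<in> S" "a \<noteq> b"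
  shows "(\<Sum>\<sigma>\<in>{\<sigma>. \<sigma> permutes S}. f \<sigma>) =
    (\<Sum>\<sigma>\<in>{\<sigma>. \<sigma> permutes S \<and> \<sigma> a < \<sigma> b}. f \<sigma> + f (\<sigma> \<circ> Transposition.transpose a b))"
proof -
  let ?\<tau> = "Transposition.transpose a b"
  let ?P = "\<lambda>a b. {\<sigma>. \<sigma> permutes S \<and> \<sigma> a < \<sigma> b}"
  have "\<sigma> a \<noteq> \<sigma> b" if "\<sigma> permutes S" for \<sigma>
    using permutes_inj[OF that] ab(3) by (auto dest: injD)
  then have split: "{\<sigma>. \<sigma> permutes S} = ?P a b \<union> ?P b a"
    by (auto simp: neq_iff)
  have "?P b a = (\<lambda>\<sigma>. \<sigma> \<circ> ?\<tau>) ` ?P a b"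
  proof
    show "(\<lambda>\<sigma>. \<sigma> \<circ> ?\<tau>) ` ?P a b \<subseteq> ?P b a"
      using permutes_compose[OF permutes_swap_id[OF ab(1,2)]] by auto
    show "?P b a \<subseteq> (\<lambda>\<sigma>. \<sigma> \<circ> ?\<tau>) ` ?P a b"
    proof
      fix \<sigma> assume "\<sigma> \<in> ?P b a"
      then have "\<sigma> \<circ> ?\<tau> \<in> ?P a b" "\<sigma> = \<sigma> \<circ> ?\<tau> \<circ> ?\<tau>"
        using permutes_compose[OF permutes_swap_id[OF ab(1,2)]] by (auto simp: comp_assoc)
      then show "\<sigma> \<in> (\<lambda>\<sigma>. \<sigma> \<circ> ?\<tau>) ` ?P a b" by blast
    qed
  qed
  moreover have "inj_on (\<lambda>\<sigma>. \<sigma> \<circ> ?\<tau>) (?P a b)"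
    by (rule inj_onI) (metis comp_assoc comp_id transpose_comp_involutory)
  moreover have "finite (?P c d)" for c d
    using finite_permutations[OF S] by simp
  ultimately have "sum f (?P b a) = (\<Sum>\<sigma>\<in>?P a b. f (\<sigma> \<circ> ?\<tau>))"
    by (simp add: sum.reindex)
  moreover have "sum f {\<sigma>. \<sigma> permutes S} = sum f (?P a b) + sum f (?P b a)"
    unfolding split using finite_permutations[OF S] by (intro sum.union_disjoint) auto
  ultimately show ?thesis
    by (simp add: sum.distrib)
qed

lemma prod_list_map_upt_split_pair:
  assumes "1 \<le> t" "t < p"
  shows "prod_list (map g [1..<p + 1]) =
    prod_list (map g [1..<t]) * (g t * g (Suc t)) * prod_list (map g [Suc (Suc t)..<p + 1])"
proof -
  have "[1..<p + 1] = [1..<t] @ t # Suc t # [Suc (Suc t)..<p + 1]"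
    using assms upt_add_eq_append[of 1 t "p + 1 - t"] by (simp add: upt_conv_Cons)
  then show ?thesis
    by (simp add: mult.assoc)
qed

lemma qdet_q_sum_qminor2:
  fixes B :: "nat \<Rightarrow> nat \<Rightarrow> 'a::division_ring"
  assumes q: "central q" and t: "1 \<le> t" "t < p"
  shows "qdet_q q p B = (\<Sum>\<sigma>\<in>{\<sigma>. \<sigma> permutes {1..p} \<and> \<sigma> t < \<sigma> (Suc t)}.
      inverse (- q) ^ inversions \<sigma> p *
        (prod_list (map (\<lambda>i. B i (\<sigma> i)) [1..<t]) * qminor2 q B t (\<sigma> t) (\<sigma> (Suc t)) *
         prod_list (map (\<lambda>i. B i (\<sigma> i)) [Suc (Suc t)..<p + 1])))"
proof -
  define w where "w = inverse (- q)"
  let ?\<tau> = "Transposition.transpose t (Suc t)"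
  let ?L = "\<lambda>\<sigma>. prod_list (map (\<lambda>i. B i (\<sigma> i)) [1..<t])"
  let ?R = "\<lambda>\<sigma>. prod_list (map (\<lambda>i. B i (\<sigma> i)) [Suc (Suc t)..<p + 1])"
  let ?F = "\<lambda>\<sigma>. w ^ inversions \<sigma> p * prod_list (map (\<lambda>i. B i (\<sigma> i)) [1..<p + 1])"
  have w: "central w"
    unfolding w_def by (intro central_inverse central_minus q)
  have pair: "?F \<sigma> + ?F (\<sigma> \<circ> ?\<tau>) =
      w ^ inversions \<sigma> p * (?L \<sigma> * qminor2 q B t (\<sigma> t) (\<sigma> (Suc t)) * ?R \<sigma>)"
    if less: "\<sigma> t < \<sigma> (Suc t)" for \<sigma>
  proof -
    have same: "?L (\<sigma> \<circ> ?\<tau>) = ?L \<sigma>" "?R (\<sigma> \<circ> ?\<tau>) = ?R \<sigma>"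
      by (auto intro!: arg_cong[where f = prod_list] simp: transpose_def)
    let ?X = "B t (\<sigma> (Suc t)) * B (Suc t) (\<sigma> t)"
    have "?F (\<sigma> \<circ> ?\<tau>) = w ^ Suc (inversions \<sigma> p) * (?L \<sigma> * ?X * ?R \<sigma>)"
      unfolding prod_list_map_upt_split_pair[OF t] inversions_comp_transpose[OF t less] same
      by simp
    also have "\<dots> = w ^ inversions \<sigma> p * (?L \<sigma> * (w * ?X) * ?R \<sigma>)"
      by (simp only: power_Suc2 mult.assoc central_mult_left_commute[OF w])
    also have "\<dots> = w ^ inversions \<sigma> p * (?L \<sigma> * (- (inverse q * ?X)) * ?R \<sigma>)"
      by (simp add: w_def)
    finally show ?thesis
      unfolding prod_list_map_upt_split_pair[OF t] qminor2_def by (simp add: algebra_simps)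
  qed
  have "qdet_q q p B = sum ?F {\<sigma>. \<sigma> permutes {1..p}}"
    unfolding qdet_q_power_inverse w_def ..
  also have "\<dots> = (\<Sum>\<sigma>\<in>{\<sigma>. \<sigma> permutes {1..p} \<and> \<sigma> t < \<sigma> (Suc t)}. ?F \<sigma> + ?F (\<sigma> \<circ> ?\<tau>))"
    by (rule sum_permutations_transpose_pairs) (use t in auto)
  also have "\<dots> = (\<Sum>\<sigma>\<in>{\<sigma>. \<sigma> permutes {1..p} \<and> \<sigma> t < \<sigma> (Suc t)}.
      w ^ inversions \<sigma> p * (?L \<sigma> * qminor2 q B t (\<sigma> t) (\<sigma> (Suc t)) * ?R \<sigma>))"
    by (rule sum.cong[OF refl], rule pair) simp
  finally show ?thesis
    unfolding w_def .
qed

lemma qdet_q_adjacent_rows: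
  fixes B B' :: "nat \<Rightarrow> nat \<Rightarrow> 'a::division_ring"
  assumes q: "central q" and c: "central c" and t: "1 \<le> t" "t < p"
    and rows: "\<And>i. i \<in> {1..p} \<Longrightarrow> i \<noteq> t \<Longrightarrow> i \<noteq> Suc t \<Longrightarrow> B' i = B i"
    and minors: "\<And>u v. u \<in> {1..p} \<Longrightarrow> v \<in> {1..p} \<Longrightarrow> u < v \<Longrightarrow>
      qminor2 q B' t u v = c * qminor2 q B t u v"
  shows "qdet_q q p B' = c * qdet_q q p B"
proof -
  let ?L = "\<lambda>B \<sigma>. prod_list (map (\<lambda>i. B i (\<sigma> i)) [1..<t])"
  let ?R = "\<lambda>B \<sigma>. prod_list (map (\<lambda>i. B i (\<sigma> i)) [Suc (Suc t)..<p + 1])"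
  let ?P = "{\<sigma>. \<sigma> permutes {1..p} \<and> \<sigma> t < \<sigma> (Suc t)}"
  have L: "?L B' \<sigma> = ?L B \<sigma>" and R: "?R B' \<sigma> = ?R B \<sigma>" for \<sigma>
    using t by (auto intro!: arg_cong[where f = prod_list] simp: rows)
  have "qdet_q q p B' = (\<Sum>\<sigma>\<in>?P.
      inverse (- q) ^ inversions \<sigma> p * (?L B \<sigma> * qminor2 q B' t (\<sigma> t) (\<sigma> (Suc t)) * ?R B \<sigma>))"
    unfolding qdet_q_sum_qminor2[OF q t] L R ..
  also have "\<dots> = (\<Sum>\<sigma>\<in>?P.
      c * (inverse (- q) ^ inversions \<sigma> p * (?L B \<sigma> * qminor2 q B t (\<sigma> t) (\<sigma> (Suc t)) * ?R B \<sigma>)))"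
  proof (rule sum.cong[OF refl])
    fix \<sigma> assume "\<sigma> \<in> ?P"
    then have \<sigma>: "\<sigma> permutes {1..p}" and less: "\<sigma> t < \<sigma> (Suc t)" by simp_all
    have "\<sigma> t \<in> {1..p}" "\<sigma> (Suc t) \<in> {1..p}"
      using t permutes_in_image[OF \<sigma>, of t] permutes_in_image[OF \<sigma>, of "Suc t"] by simp_all
    then have "qminor2 q B' t (\<sigma> t) (\<sigma> (Suc t)) = c * qminor2 q B t (\<sigma> t) (\<sigma> (Suc t))"
      using less by (intro minors)
    then show "inverse (- q) ^ inversions \<sigma> p * (?L B \<sigma> * qminor2 q B' t (\<sigma> t) (\<sigma> (Suc t)) * ?R B \<sigma>) =
      c * (inverse (- q) ^ inversions \<sigma> p * (?L B \<sigma> * qminor2 q B t (\<sigma> t) (\<sigma> (Suc t)) * ?R B \<sigma>))"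
      by (simp only: mult.assoc central_mult_left_commute[OF c])
  qed
  also have "\<dots> = c * qdet_q q p B"
    unfolding qdet_q_sum_qminor2[OF q t] by (simp only: sum_distrib_left)
  finally show ?thesis .
qed

lemma is_inverse_on_inv_on:
  "invertible_on R C M \<Longrightarrow> is_inverse_on R C M (inv_on R C M)"
  unfolding invertible_on_def inv_on_def by (metis someI_ex)

lemma solution_eq_left_inverse_mult:
  fixes A N :: "nat \<Rightarrow> nat \<Rightarrow> 'a::ring_1"
  assumes C: "finite C" "c' \<in> C"
    and left_inv: "\<And>c c''. c \<in> C \<Longrightarrow> c'' \<in> C \<Longrightarrow>
      (\<Sum>r\<in>R. N c r * A r c'') = (if c = c'' then 1 else 0)"
    and solution: "\<And>r. r \<in> R \<Longrightarrow> (\<Sum>c\<in>C. A r c * y c) = b r"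
  shows "y c' = (\<Sum>r\<in>R. N c' r * b r)"
proof -
  have "y c' = (\<Sum>c\<in>C. if c' = c then y c else 0)"
    using C by (simp add: sum.delta)
  also have "\<dots> = (\<Sum>c\<in>C. \<Sum>r\<in>R. N c' r * (A r c * y c))"
  proof (rule sum.cong[OF refl])
    fix c assume "c \<in> C"
    then have "(\<Sum>r\<in>R. N c' r * A r c) = (if c' = c then 1 else 0)"
      using left_inv C(2) by simp
    moreover have "(\<Sum>r\<in>R. N c' r * (A r c * y c)) = (\<Sum>r\<in>R. N c' r * A r c) * y c"
      by (simp add: sum_distrib_right mult.assoc)
    ultimately show "(if c' = c then y c else 0) = (\<Sum>r\<in>R. N c' r * (A r c * y c))"
      by simp
  qed
  also have "\<dots> = (\<Sum>r\<in>R. \<Sum>c\<in>C. N c' r * (A r c * y c))"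
    by (rule sum.swap)
  also have "\<dots> = (\<Sum>r\<in>R. N c' r * b r)"
    by (rule sum.cong[OF refl]) (simp add: solution flip: sum_distrib_left)
  finally show ?thesis .
qed

lemma quasidet_mult_eq_row_sum:
  fixes A :: "nat \<Rightarrow> nat \<Rightarrow> 'a::division_ring"
  assumes fin: "finite R" "finite C" and j: "j \<in> C"
    and defd: "quasidet_defined R C A i j"
    and kernel: "\<And>\<rho>. \<rho> \<in> R - {i} \<Longrightarrow> (\<Sum>c\<in>C. A \<rho> c * y c) = 0"
  shows "(\<Sum>c\<in>C. A i c * y c) = quasidet R C A i j * y j"
proof -
  let ?R = "R - {i}" and ?C = "C - {j}"
  define N where "N = inv_on ?R ?C A"
  have split: "(\<Sum>c\<in>C. f c) = f j + (\<Sum>c\<in>?C. f c)" for f :: "nat \<Rightarrow> 'a"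
    using fin(2) j by (simp add: sum.remove)
  have y: "y c = (\<Sum>r\<in>?R. N c r * - (A r j * y j))" if "c \<in> ?C" for c
  proof (rule solution_eq_left_inverse_mult[OF _ that])
    show "(\<Sum>r\<in>?R. N c r * A r c') = (if c = c' then 1 else 0)" if "c \<in> ?C" "c' \<in> ?C" for c c'
      using is_inverse_on_inv_on[OF defd[unfolded quasidet_defined_def]] that
      unfolding is_inverse_on_def N_def by blast
    show "(\<Sum>c\<in>?C. A \<rho> c * y c) = - (A \<rho> j * y j)" if "\<rho> \<in> ?R" for \<rho>
      using kernel[OF that] unfolding split by (simp add: eq_neg_iff_add_eq_0 add.commute)
  qed (use fin in simp)
  have "(\<Sum>c\<in>C. A i c * y c) = A i j * y j - (\<Sum>c\<in>?C. \<Sum>r\<in>?R. A i c * N c r * A r j) * y j"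
    unfolding split by (simp add: y sum_distrib_left sum_distrib_right mult.assoc sum_negf)
  also have "\<dots> = quasidet R C A i j * y j"
    unfolding quasidet_def N_def by (simp add: left_diff_distrib)
  finally show ?thesis .
qed

lemma qdet_q_expand_replaced_first_row:
  fixes A :: "nat \<Rightarrow> nat \<Rightarrow> 'a::division_ring"
  assumes q: "central q"
  shows "qdet_q q (Suc p) (\<lambda>t u. A (if t = 1 then \<rho> else t + s) (u + s)) =
    (\<Sum>u\<in>{s + 1..s + Suc p}. A \<rho> u *
      (inverse (- q) ^ (u - s - 1) * qdet_q q p (\<lambda>i j. A (Suc i + s) (skip (u - s) j + s))))"
proof -
  have minor: "qdet_q q p (\<lambda>i j. A (if Suc i = 1 then \<rho> else Suc i + s) (skip k j + s)) =
      qdet_q q p (\<lambda>i j. A (Suc i + s) (skip k j + s))" for k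
    by (rule qdet_q_cong) simp
  have "qdet_q q (Suc p) (\<lambda>t u. A (if t = 1 then \<rho> else t + s) (u + s)) =
    (\<Sum>k = 1..Suc p. A \<rho> (k + s) *
      (inverse (- q) ^ (k - 1) * qdet_q q p (\<lambda>i j. A (Suc i + s) (skip k j + s))))"
    unfolding qdet_q_expand_first_row[OF q] minor by simp
  also have "\<dots> = (\<Sum>u\<in>{1 + s..Suc p + s}. A \<rho> u *
      (inverse (- q) ^ (u - s - 1) * qdet_q q p (\<lambda>i j. A (Suc i + s) (skip (u - s) j + s))))"
    unfolding sum.shift_bounds_cl_nat_ivl by simp
  finally show ?thesis
    by (simp add: add.commute)
qed

lemma qdet_q_trailing_factor:
  fixes A :: "nat \<Rightarrow> nat \<Rightarrow> 'a::division_ring"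
  assumes q: "central q"
    and vanish: "\<And>\<rho>. \<rho> \<in> {s + 2..s + Suc p} \<Longrightarrow>
      qdet_q q (Suc p) (\<lambda>t u. A (if t = 1 then \<rho> else t + s) (u + s)) = 0"
    and defd: "quasidet_defined {s + 1..s + Suc p} {s + 1..s + Suc p} A (s + 1) (s + 1)"
  shows "qdet_q q (Suc p) (\<lambda>t u. A (t + s) (u + s)) =
    quasidet {s + 1..s + Suc p} {s + 1..s + Suc p} A (s + 1) (s + 1) *
    qdet_q q p (\<lambda>t u. A (t + Suc s) (u + Suc s))"
proof -
  let ?I = "{s + 1..s + Suc p}"
  define y where "y u = inverse (- q) ^ (u - s - 1) *
    qdet_q q p (\<lambda>i j. A (Suc i + s) (skip (u - s) j + s))" for u
  note expand = qdet_q_expand_replaced_first_row[OF q, of p A _ s, folded y_def]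
  have "y (s + 1) = qdet_q q p (\<lambda>t u. A (t + Suc s) (u + Suc s))"
    unfolding y_def by (simp, rule qdet_q_cong) (simp add: skip_def)
  moreover have "qdet_q q (Suc p) (\<lambda>t u. A (t + s) (u + s)) = (\<Sum>u\<in>?I. A (s + 1) u * y u)"
  proof -
    have "(\<lambda>t u. A (t + s) (u + s)) = (\<lambda>t u. A (if t = 1 then s + 1 else t + s) (u + s))"
      by (simp add: fun_eq_iff)
    then show ?thesis
      using expand[of "s + 1"] by simp
  qed
  moreover have "(\<Sum>u\<in>?I. A (s + 1) u * y u) = quasidet ?I ?I A (s + 1) (s + 1) * y (s + 1)"
  proof (rule quasidet_mult_eq_row_sum[OF _ _ _ defd])
    fix \<rho> assume "\<rho> \<in> ?I - {s + 1}"
    then have "\<rho> \<in> {s + 2..s + Suc p}" by auto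
    from vanish[OF this] show "(\<Sum>u\<in>?I. A \<rho> u * y u) = 0"
      unfolding expand .
  qed simp_all
  ultimately show ?thesis by simp
qed

definition submatrix :: "(nat \<Rightarrow> nat \<Rightarrow> 'a) \<Rightarrow> (nat \<Rightarrow> nat) \<Rightarrow> (nat \<Rightarrow> nat) \<Rightarrow> nat \<Rightarrow> nat \<Rightarrow> 'a" where
  "submatrix x r c = (\<lambda>s u. x (r s) (c u))"

lemma q_generic_same_row:
  assumes "q_generic q n m x" "a \<in> {1..n}" "u \<in> {1..m}" "v \<in> {1..m}" "u < v"
  shows "x a v * x a u = q * x a u * x a v"
  using assms unfolding q_generic_def by blast

lemma q_generic_rows:
  assumes "q_generic q n m x" "a \<in> {1..n}" "b \<in> {1..n}" "a < b" "u \<in> {1..m}" "v \<in> {1..m}" "u < v"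
  shows "x b u * x a v = x a v * x b u"
    and "x b v * x a u = x a u * x b v + (q - inverse q) * x a v * x b u"
  using assms unfolding q_generic_def by blast+

lemma q_generic_qminor2_same_row:
  fixes q :: "'a::division_ring"
  assumes gen: "q_generic q n m x" and q0: "q \<noteq> 0"
    and "a \<in> {1..n}" "u \<in> {1..m}" "v \<in> {1..m}" "u < v"
  shows "x a u * x a v - inverse q * (x a v * x a u) = 0"
  using q_generic_same_row[OF assms(1,3-)] q0 by (simp add: mult.assoc[symmetric])

lemma q_generic_qminor2_swap_rows:
  fixes q :: "'a::division_ring"
  assumes gen: "q_generic q n m x" and q0: "q \<noteq> 0"
    and ab: "a \<in> {1..n}" "b \<in> {1..n}" "a < b" and uv: "u \<in> {1..m}" "v \<in> {1..m}" "u < v"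
  shows "x b u * x a v - inverse q * (x b v * x a u) =
    - inverse q * (x a u * x b v - inverse q * (x a v * x b u))"
proof -
  have "inverse q * (q * z) = z" for z
    using q0 by (simp add: mult.assoc[symmetric])
  then show ?thesis
    unfolding q_generic_rows[OF gen ab uv] by (simp add: algebra_simps)
qed

context
  fixes q :: "'a::division_ring" and n m :: nat and x :: "nat \<Rightarrow> nat \<Rightarrow> 'a"
  assumes gen: "q_generic q n m x" and q: "central q" and q0: "q \<noteq> 0"
begin

lemma qdet_q_submatrix_adjacent_equal_rows:
  assumes r: "\<forall>i\<in>{1..p}. r i \<in> {1..n}" and c: "strict_mono_on {1..p} c" "c ` {1..p} \<subseteq> {1..m}"
    and t: "1 \<le> t" "t < p" and eq: "r t = r (Suc t)"
  shows "qdet_q q p (submatrix x r c) = 0"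
proof -
  have "qdet_q q p (submatrix x r c) = 0 * qdet_q q p (submatrix x r c)"
  proof (rule qdet_q_adjacent_rows[OF q _ t])
    fix u v assume uv: "u \<in> {1..p}" "v \<in> {1..p}" "u < v"
    have "r t \<in> {1..n}" using r t by simp
    moreover have "c u \<in> {1..m}" "c v \<in> {1..m}" using c(2) uv by blast+
    moreover have "c u < c v" using strict_mono_onD[OF c(1)] uv by blast
    ultimately show "qminor2 q (submatrix x r c) t u v = 0 * qminor2 q (submatrix x r c) t u v"
      unfolding qminor2_def submatrix_def eq[symmetric]
      by (simp add: q_generic_qminor2_same_row[OF gen q0])
  qed (simp_all add: central_def)
  then show ?thesis by simp
qed

lemma qdet_q_submatrix_swap_adjacent_rows:
  assumes r: "\<forall>i\<in>{1..p}. r i \<in> {1..n}" and c: "strict_mono_on {1..p} c" "c ` {1..p} \<subseteq> {1..m}"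
    and t: "1 \<le> t" "t < p" and less: "r t < r (Suc t)"
  shows "qdet_q q p (submatrix x (r \<circ> Transposition.transpose t (Suc t)) c) =
    - inverse q * qdet_q q p (submatrix x r c)"
proof (rule qdet_q_adjacent_rows[OF q _ t])
  show "central (- inverse q)"
    by (intro central_minus central_inverse q)
next
  fix u v assume uv: "u \<in> {1..p}" "v \<in> {1..p}" "u < v"
  have "r t \<in> {1..n}" "r (Suc t) \<in> {1..n}" using r t by simp_all
  moreover have "c u \<in> {1..m}" "c v \<in> {1..m}" using c(2) uv by blast+
  moreover have "c u < c v" using strict_mono_onD[OF c(1)] uv by blast
  ultimately show "qminor2 q (submatrix x (r \<circ> Transposition.transpose t (Suc t)) c) t u v =
      - inverse q * qminor2 q (submatrix x r c) t u v"
    unfolding qminor2_def submatrix_def using q_generic_qminor2_swap_rows[OF gen q0 _ _ less]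
    by simp
qed (auto simp: submatrix_def)

lemma qdet_q_submatrix_swap_adjacent_rows_eq_0_iff:
  assumes r: "\<forall>i\<in>{1..p}. r i \<in> {1..n}" and c: "strict_mono_on {1..p} c" "c ` {1..p} \<subseteq> {1..m}"
    and t: "1 \<le> t" "t < p" and neq: "r t \<noteq> r (Suc t)"
  shows "qdet_q q p (submatrix x (r \<circ> Transposition.transpose t (Suc t)) c) = 0 \<longleftrightarrow>
    qdet_q q p (submatrix x r c) = 0"
proof -
  let ?\<tau> = "Transposition.transpose t (Suc t)"
  have q': "- inverse q \<noteq> 0" using q0 by simp
  show ?thesis
  proof (cases "r t < r (Suc t)")
    case True
    then show ?thesis
      using qdet_q_submatrix_swap_adjacent_rows[OF r c t] q' by simp
  next
    case False
    then have "(r \<circ> ?\<tau>) t < (r \<circ> ?\<tau>) (Suc t)" using neq by simp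
    moreover have "\<forall>i\<in>{1..p}. (r \<circ> ?\<tau>) i \<in> {1..n}"
      using r transpose_Suc_mem_iff[OF t] by simp
    ultimately show ?thesis
      using qdet_q_submatrix_swap_adjacent_rows[OF _ c t, of "r \<circ> ?\<tau>"] q'
      by (simp add: comp_assoc)
  qed
qed

lemma qdet_q_submatrix_equal_rows:
  assumes r: "\<forall>i\<in>{1..p}. r i \<in> {1..n}" and c: "strict_mono_on {1..p} c" "c ` {1..p} \<subseteq> {1..m}"
    and ij: "1 \<le> i" "i < j" "j \<le> p" and eq: "r i = r j"
  shows "qdet_q q p (submatrix x r c) = 0"
  using r ij eq
proof (induction j arbitrary: r rule: less_induct)
  case (less j)
  show ?case
  proof (cases "j = Suc i")
    case True
    then show ?thesis
      using qdet_q_submatrix_adjacent_equal_rows[OF less.prems(1) c] less.prems by simp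
  next
    case False
    define t where "t = j - 1"
    have t: "1 \<le> t" "t < p" "i < t" "Suc t = j"
      using False less.prems unfolding t_def by auto
    let ?r' = "r \<circ> Transposition.transpose t (Suc t)"
    show ?thesis
    proof (cases "r t = r (Suc t)")
      case True
      then show ?thesis
        using qdet_q_submatrix_adjacent_equal_rows[OF less.prems(1) c t(1,2)] by simp
    next
      case False
      have r': "\<forall>i\<in>{1..p}. ?r' i \<in> {1..n}"
        using less.prems(1) transpose_Suc_mem_iff[OF t(1,2)] by simp
      have "?r' i = ?r' t"
        using t less.prems by (auto simp: transpose_def)
      then have "qdet_q q p (submatrix x ?r' c) = 0"
        using t less.prems(2) by (intro less.IH[of t ?r'] r') auto
      then show ?thesis
        using qdet_q_submatrix_swap_adjacent_rows_eq_0_iff[OF less.prems(1) c t(1,2) False] by simp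
    qed
  qed
qed

lemma qdet_q_generic_trailing_factor:
  assumes idx: "\<forall>t\<in>{1..m}. idx t \<in> {1..n}" and s: "s < m"
    and defd: "quasidet_defined {s + 1..m} {s + 1..m} (\<lambda>t u. x (idx t) u) (s + 1) (s + 1)"
  shows "qdet_q q (m - s) (\<lambda>t u. x (idx (t + s)) (u + s)) =
    quasidet {s + 1..m} {s + 1..m} (\<lambda>t u. x (idx t) u) (s + 1) (s + 1) *
    qdet_q q (m - Suc s) (\<lambda>t u. x (idx (t + Suc s)) (u + Suc s))"
proof -
  obtain p where m: "m = s + Suc p"
    using s by (metis add_Suc_right less_iff_Suc_add)
  have "qdet_q q (Suc p) (\<lambda>t u. x (idx (if t = 1 then \<rho> else t + s)) (u + s)) = 0"
    if \<rho>: "\<rho> \<in> {s + 2..s + Suc p}" for \<rho>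
  proof -
    let ?r = "\<lambda>t. idx (if t = 1 then \<rho> else t + s)" and ?c = "\<lambda>u. u + s"
    have "qdet_q q (Suc p) (submatrix x ?r ?c) = 0"
    proof (rule qdet_q_submatrix_equal_rows)
      show "\<forall>t\<in>{1..Suc p}. ?r t \<in> {1..n}"
        using idx \<rho> m by auto
      show "strict_mono_on {1..Suc p} ?c"
        by (rule strict_mono_onI) simp
      show "?c ` {1..Suc p} \<subseteq> {1..m}"
        using m by auto
      show "?r 1 = ?r (\<rho> - s)"
        using \<rho> by simp
    qed (use \<rho> in auto)
    then show ?thesis
      by (simp add: submatrix_def)
  qed
  then have "qdet_q q (Suc p) (\<lambda>t u. x (idx (t + s)) (u + s)) =
      quasidet {s + 1..s + Suc p} {s + 1..s + Suc p} (\<lambda>t u. x (idx t) u) (s + 1) (s + 1) *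
      qdet_q q p (\<lambda>t u. x (idx (t + Suc s)) (u + Suc s))"
    using qdet_q_trailing_factor[OF q, of s p "\<lambda>t u. x (idx t) u"] defd m by simp
  then show ?thesis
    using m by simp
qed

end

theorem mainTheorem6:
  fixes q :: "'a::{division_ring, ring_char_0}"
    and x :: "nat \<Rightarrow> nat \<Rightarrow> 'a" and n m :: nat and idx :: "nat \<Rightarrow> nat"
  assumes q_central: "\<forall>y. q * y = y * q"
    and q_nz: "q \<noteq> 0"
    and q_not_root: "\<forall>k>0. q ^ k \<noteq> 1"
    and gen: "q_generic q n m x"
    and mn: "m \<le> n"
    and idx: "\<forall>t\<in>{1..m}. idx t \<in> {1..n}"
    and defd: "\<forall>k<m. quasidet_defined {k+1..m} {k+1..m} (\<lambda>t s. x (idx t) s) (k+1) (k+1)"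
  shows "qdet_q q m (\<lambda>t s. x (idx t) s) =
         prod_list (map (\<lambda>k. quasidet {k+1..m} {k+1..m} (\<lambda>t s. x (idx t) s) (k+1) (k+1)) [0..<m])"
proof -
  let ?qd = "\<lambda>k. quasidet {k+1..m} {k+1..m} (\<lambda>t s. x (idx t) s) (k+1) (k+1)"
  have q: "central q"
    using q_central by (simp add: central_def)
  have "qdet_q q (m - s) (\<lambda>t u. x (idx (t + s)) (u + s)) = prod_list (map ?qd [s..<m])"
    if "s \<le> m" for s
    using that
  proof (induction s rule: inc_induct)
    case (step s)
    have "qdet_q q (m - s) (\<lambda>t u. x (idx (t + s)) (u + s)) =
        ?qd s * qdet_q q (m - Suc s) (\<lambda>t u. x (idx (t + Suc s)) (u + Suc s))"
      using qdet_q_generic_trailing_factor[OF gen q q_nz idx step.hyps(2)] defd step.hyps by simp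
    also have "\<dots> = prod_list (map ?qd [s..<m])"
      using step.IH step.hyps by (simp add: upt_conv_Cons)
    finally show ?case .
  qed simp
  from this[of 0] show ?thesis
    by simp
qed

end
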